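(* For every $n\ge1$, $|\mathcal{B}_n(123)|=C(\lceil n/2\rceil)$, where $C(m)=\frac{1}{m+1}\binom{2m}{m}$ is the $m$-th Catalan number.
   Context: A ballot permutation is a $\pi\in\mathfrak{S}_n$ such that every prefix $\pi_1\cdots\pi_i$ has at most as many descents ($\pi_j>\pi_{j+1}$) as ascents ($\pi_j<\pi_{j+1}$); $\mathcal{B}_n$ denotes the set of them. A permutation avoids the pattern $\sigma\in\mathfrak{S}_k$ if it has no subsequence order-isomorphic to $\sigma$; $\mathcal{B}_n(\sigma)$ is the set of $\sigma$-avoiding elements of $\mathcal{B}_n$. *)

theory Defs
  imports Main
begin

definition perms :: "nat \<Rightarrow> nat list set" where
  "perms n = {xs. distinct xs \<and> set xs = {1..n}}"

text \<open>Number of descents / ascents in the prefix of length i (positions j with j+1 < i, 0-based).\<close>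
definition descents_prefix :: "nat list \<Rightarrow> nat \<Rightarrow> nat" where
  "descents_prefix xs i = card {j. j + 1 < i \<and> j + 1 < length xs \<and> xs ! j > xs ! (j + 1)}"

definition ascents_prefix :: "nat list \<Rightarrow> nat \<Rightarrow> nat" where
  "ascents_prefix xs i = card {j. j + 1 < i \<and> j + 1 < length xs \<and> xs ! j < xs ! (j + 1)}"

definition ballot :: "nat list \<Rightarrow> bool" where
  "ballot xs \<longleftrightarrow> (\<forall>i \<le> length xs. descents_prefix xs i \<le> ascents_prefix xs i)"

definition contains_123 :: "nat list \<Rightarrow> bool" where
  "contains_123 xs \<longleftrightarrow> (\<exists>a b c. a < b \<and> b < c \<and> c < length xs \<and>
      xs ! a < xs ! b \<and> xs ! b < xs ! c)"

definition ballot_avoid_123 :: "nat \<Rightarrow> nat list set" where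
  "ballot_avoid_123 n = {xs \<in> perms n. ballot xs \<and> \<not> contains_123 xs}"

definition catalan :: "nat \<Rightarrow> nat" where
  "catalan m = ((2 * m) choose m) div (m + 1)"

end

theory Submission
  imports Defs
begin

text \<open>Let \<open>\<pi>\<close> be a ballot permutation avoiding 123 whose prefix \<open>\<pi>\<^sub>1 < \<pi>\<^sub>2 > \<pi>\<^sub>3 < \<dots>\<close>
  alternates up to \<open>\<pi>\<^sub>i\<close>. If \<open>i\<close> is odd, a descent \<open>\<pi>\<^sub>i > \<pi>\<^sub>i\<^sub>+\<^sub>1\<close> would give more descents than
  ascents; if \<open>i\<close> is even, an ascent \<open>\<pi>\<^sub>i < \<pi>\<^sub>i\<^sub>+\<^sub>1\<close> would complete a 123 with \<open>\<pi>\<^sub>i\<^sub>-\<^sub>1\<close>.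
  So these permutations are exactly the alternating ones avoiding 123, and for alternating
  permutations avoiding 123 means that the peaks decrease and the valleys decrease (a final valley
  excepted). Peaks and valleys are then the two rows of a standard Young tableau of shape
  \<open>(\<lceil>n/2\<rceil>, \<lfloor>n/2\<rfloor>)\<close> for the reversed order, where for odd \<open>n\<close> the final valley closes the
  top row. Removing the smallest entry shows that there are \<open>C(p + q, q) - C(p + q, q - 1)\<close>
  tableaux of shape \<open>(p, q)\<close>, and for both shapes this is the Catalan number \<open>C(\<lceil>n/2\<rceil>)\<close>.\<close>

section \<open>Ballot numbers\<close>

definition ballot_number :: "nat \<Rightarrow> nat \<Rightarrow> int" where
  "ballot_number p q = int ((p + q) choose q) - (if q = 0 then 0 else int ((p + q) choose (q - 1)))"

lemma ballot_number_0_right [simp]: "ballot_number p 0 = 1"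
  by (simp add: ballot_number_def)

lemma ballot_number_Suc_Suc:
  assumes "q < p"
  shows "ballot_number (Suc p) (Suc q) = ballot_number p (Suc q) + ballot_number (Suc p) q"
proof (cases q)
  case 0
  then show ?thesis by (simp add: ballot_number_def)
next
  case (Suc r)
  have "(Suc p + Suc q) choose (Suc q) = ((p + Suc q) choose q) + ((p + Suc q) choose (Suc q))"
    "(Suc p + Suc q) choose q = ((p + Suc q) choose r) + ((p + Suc q) choose q)"
    using Suc by simp_all
  then show ?thesis
    using Suc by (simp add: ballot_number_def algebra_simps)
qed

lemma ballot_number_diagonal: "ballot_number (Suc p) (Suc p) = ballot_number (Suc p) p"
proof -
  have "(Suc p + Suc p) choose (Suc p) = ((p + Suc p) choose p) + ((p + Suc p) choose (Suc p))"
    by simp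
  moreover have "(p + Suc p) choose (Suc p) = (p + Suc p) choose p"
    using binomial_symmetric[of "Suc p" "p + Suc p"] by simp
  ultimately show ?thesis
    by (cases p) (simp_all add: ballot_number_def algebra_simps)
qed

lemma ballot_number_catalan: "ballot_number k k = int (catalan k)"
proof (cases k)
  case 0
  then show ?thesis by (simp add: ballot_number_def catalan_def)
next
  case (Suc r)
  have "2 * k = Suc (r + Suc r)"
    using Suc by simp
  then have key: "((2 * k) choose r) * (k + 1) = ((2 * k) choose k) * k"
    using Suc_times_binomial_add[of r "Suc r"] Suc by (simp only: mult.commute Suc_eq_plus1)
  then have "((2 * k) choose r) * (k + 1) \<le> ((2 * k) choose k) * (k + 1)"
    by simp
  then have le: "(2 * k) choose r \<le> (2 * k) choose k"
    by (simp only: mult_le_cancel2)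
  have eq: "(((2 * k) choose k) - ((2 * k) choose r)) * (k + 1) = (2 * k) choose k"
    using key by (simp add: diff_mult_distrib algebra_simps)
  have "(((2 * k) choose k) - ((2 * k) choose r)) * (k + 1) div (k + 1) =
      ((2 * k) choose k) - ((2 * k) choose r)"
    by (rule div_mult_self_is_m) simp
  then have "((2 * k) choose k) div (k + 1) = ((2 * k) choose k) - ((2 * k) choose r)"
    by (simp only: eq)
  then show ?thesis
    using Suc le by (simp add: ballot_number_def catalan_def mult_2 of_nat_diff)
qed

section \<open>Two-row standard Young tableaux\<close>

text \<open>Standard Young tableaux of shape \<open>(p, q)\<close> filled with \<open>S\<close>, for the reversed order on
  \<open>S\<close>: the rows \<open>as\<close> (top) and \<open>bs\<close> (bottom) decrease and \<open>bs ! i < as ! i\<close> column by column.\<close>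
definition two_row_tableaux :: "nat set \<Rightarrow> nat \<Rightarrow> nat \<Rightarrow> (nat list \<times> nat list) set" where
  "two_row_tableaux S p q = {(as, bs). length as = p \<and> length bs = q \<and> q \<le> p \<and>
     sorted_wrt (>) as \<and> sorted_wrt (>) bs \<and> set as \<inter> set bs = {} \<and> set as \<union> set bs = S \<and>
     (\<forall>i<q. bs ! i < as ! i)}"

lemma finite_two_row_tableaux:
  assumes "finite S"
  shows "finite (two_row_tableaux S p q)"
proof -
  have "two_row_tableaux S p q \<subseteq> {xs. set xs \<subseteq> S \<and> length xs = p} \<times> {xs. set xs \<subseteq> S \<and> length xs = q}"
    unfolding two_row_tableaux_def by auto
  then show ?thesis
    using finite_lists_length_eq[OF assms] by (meson finite_SigmaI finite_subset)
qed

lemma sorted_wrt_greater_ends_with_Min: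
  assumes "sorted_wrt (>) xs" "(m :: 'a :: linorder) \<in> set xs" "\<forall>x\<in>set xs. m \<le> x"
  shows "\<exists>ys. xs = ys @ [m]"
proof -
  obtain ys zs where xs: "xs = ys @ m # zs"
    using assms(2) by (meson split_list)
  have "zs = []"
  proof (rule ccontr)
    assume "zs \<noteq> []"
    then obtain z where "z \<in> set zs" by fastforce
    then have "z < m" "m \<le> z"
      using assms(1,3) xs by (auto simp: sorted_wrt_append)
    then show False by simp
  qed
  then show ?thesis using xs by blast
qed

lemma two_row_tableaux_snoc_top:
  assumes "q \<le> p"
  shows "(as @ [c], bs) \<in> two_row_tableaux S (Suc p) q \<longleftrightarrow>
    c \<in> S \<and> (as, bs) \<in> two_row_tableaux (S - {c}) p q \<and> (\<forall>a\<in>set as. c < a)"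
proof -
  have "(\<forall>i<q. bs ! i < (as @ [c]) ! i) \<longleftrightarrow> (\<forall>i<q. bs ! i < as ! i)" if "length as = p"
    using that assms by (simp add: nth_append)
  moreover have "c \<notin> set as" if "\<forall>a\<in>set as. c < a"
    using that by blast
  ultimately show ?thesis
    using assms unfolding two_row_tableaux_def by (auto simp: sorted_wrt_append)
qed

lemma two_row_tableaux_snoc_bottom:
  assumes "q < p"
  shows "(as, bs @ [c]) \<in> two_row_tableaux S p (Suc q) \<longleftrightarrow>
    c \<in> S \<and> (as, bs) \<in> two_row_tableaux (S - {c}) p q \<and> (\<forall>b\<in>set bs. c < b) \<and> c < as ! q"
proof -
  have "(\<forall>i<Suc q. (bs @ [c]) ! i < as ! i) \<longleftrightarrow> (\<forall>i<q. bs ! i < as ! i) \<and> c < as ! q"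
    if "length bs = q"
    using that by (auto simp: nth_append less_Suc_eq)
  moreover have "c \<notin> set bs" if "\<forall>b\<in>set bs. c < b"
    using that by blast
  ultimately show ?thesis
    using assms unfolding two_row_tableaux_def by (auto simp: sorted_wrt_append)
qed

lemma two_row_tableaux_Min_in_top:
  assumes "finite S" "S \<noteq> {}" "q \<le> p"
  shows "{t \<in> two_row_tableaux S (Suc p) q. Min S \<in> set (fst t)} =
    (\<lambda>(as, bs). (as @ [Min S], bs)) ` two_row_tableaux (S - {Min S}) p q"
    (is "?L = ?R")
proof
  show "?L \<subseteq> ?R"
  proof clarify
    fix as bs
    assume t: "(as, bs) \<in> two_row_tableaux S (Suc p) q" and "Min S \<in> set (fst (as, bs))"
    moreover have "sorted_wrt (>) as" and sub: "set as \<subseteq> S"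
      using t unfolding two_row_tableaux_def by auto
    moreover have "\<forall>x\<in>set as. Min S \<le> x"
      using assms(1) sub by auto
    ultimately obtain as' where as: "as = as' @ [Min S]"
      using sorted_wrt_greater_ends_with_Min[of as "Min S"] by auto
    then have "(as', bs) \<in> two_row_tableaux (S - {Min S}) p q"
      using t two_row_tableaux_snoc_top[OF assms(3)] by simp
    then show "(as, bs) \<in> ?R"
      using as by force
  qed
  show "?R \<subseteq> ?L"
  proof
    fix t
    assume "t \<in> ?R"
    then obtain as bs where t: "t = (as @ [Min S], bs)" "(as, bs) \<in> two_row_tableaux (S - {Min S}) p q"
      by auto
    then have "\<forall>a\<in>set as. Min S < a"
      using assms(1) unfolding two_row_tableaux_def by (auto intro: Min_le le_neq_implies_less)
    then show "t \<in> ?L"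
      using t assms two_row_tableaux_snoc_top by simp
  qed
qed

lemma two_row_tableaux_Min_in_bottom:
  assumes "finite S" "S \<noteq> {}" "q < p"
  shows "{t \<in> two_row_tableaux S p (Suc q). Min S \<in> set (snd t)} =
    (\<lambda>(as, bs). (as, bs @ [Min S])) ` two_row_tableaux (S - {Min S}) p q"
    (is "?L = ?R")
proof
  show "?L \<subseteq> ?R"
  proof clarify
    fix as bs
    assume t: "(as, bs) \<in> two_row_tableaux S p (Suc q)" and "Min S \<in> set (snd (as, bs))"
    moreover have "sorted_wrt (>) bs" and sub: "set bs \<subseteq> S"
      using t unfolding two_row_tableaux_def by auto
    moreover have "\<forall>x\<in>set bs. Min S \<le> x"
      using assms(1) sub by auto
    ultimately obtain bs' where bs: "bs = bs' @ [Min S]"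
      using sorted_wrt_greater_ends_with_Min[of bs "Min S"] by auto
    then have "(as, bs') \<in> two_row_tableaux (S - {Min S}) p q"
      using t two_row_tableaux_snoc_bottom[OF assms(3)] by simp
    then show "(as, bs) \<in> ?R"
      using bs by force
  qed
  show "?R \<subseteq> ?L"
  proof
    fix t
    assume "t \<in> ?R"
    then obtain as bs where t: "t = (as, bs @ [Min S])" "(as, bs) \<in> two_row_tableaux (S - {Min S}) p q"
      by auto
    then have "\<forall>x\<in>set as \<union> set bs. Min S < x" "as ! q \<in> set as"
      using assms unfolding two_row_tableaux_def by (auto intro: Min_le le_neq_implies_less)
    then show "t \<in> ?L"
      using t assms two_row_tableaux_snoc_bottom by simp
  qed
qed

lemma two_row_tableaux_square_Min_not_in_top:
  assumes "finite S"
  shows "{t \<in> two_row_tableaux S p p. Min S \<in> set (fst t)} = {}"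
proof (rule ccontr)
  assume "{t \<in> two_row_tableaux S p p. Min S \<in> set (fst t)} \<noteq> {}"
  then obtain as bs where t: "(as, bs) \<in> two_row_tableaux S p p" and "Min S \<in> set as"
    by auto
  moreover have "\<forall>x\<in>S. Min S \<le> x"
    using assms by simp
  ultimately obtain as' where as: "as = as' @ [Min S]"
    using sorted_wrt_greater_ends_with_Min[of as "Min S"] unfolding two_row_tableaux_def by auto
  define i where "i = length as'"
  \<comment> \<open>the bottom entry below the minimum would be smaller still\<close>
  have "bs ! i < Min S" "bs ! i \<in> S"
    using t as unfolding i_def two_row_tableaux_def by auto
  then show False
    using assms by (meson Min_le leD)
qed

lemma card_two_row_tableaux_split:
  assumes "finite S" "S \<noteq> {}"
  shows "card (two_row_tableaux S p q) =
    card {t \<in> two_row_tableaux S p q. Min S \<in> set (fst t)} +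
    card {t \<in> two_row_tableaux S p q. Min S \<in> set (snd t)}"
proof -
  have "two_row_tableaux S p q = {t \<in> two_row_tableaux S p q. Min S \<in> set (fst t)} \<union>
      {t \<in> two_row_tableaux S p q. Min S \<in> set (snd t)}" (is "_ = ?A \<union> ?B")
    using Min_in[OF assms] unfolding two_row_tableaux_def by auto
  moreover have "?A \<inter> ?B = {}"
    unfolding two_row_tableaux_def by auto
  ultimately show ?thesis
    using finite_two_row_tableaux[OF assms(1)] card_Un_disjoint[of ?A ?B] by simp
qed

lemma card_two_row_tableaux_Min_in_top:
  assumes "finite S" "S \<noteq> {}" "q \<le> p"
  shows "card {t \<in> two_row_tableaux S (Suc p) q. Min S \<in> set (fst t)} =
    card (two_row_tableaux (S - {Min S}) p q)"
proof -
  have "inj_on (\<lambda>(as, bs). (as @ [Min S], bs :: nat list)) (two_row_tableaux (S - {Min S}) p q)"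
    by (auto simp: inj_on_def)
  then show ?thesis
    using two_row_tableaux_Min_in_top[OF assms] card_image by simp
qed

lemma card_two_row_tableaux_Min_in_bottom:
  assumes "finite S" "S \<noteq> {}" "q < p"
  shows "card {t \<in> two_row_tableaux S p (Suc q). Min S \<in> set (snd t)} =
    card (two_row_tableaux (S - {Min S}) p q)"
proof -
  have "inj_on (\<lambda>(as :: nat list, bs). (as, bs @ [Min S])) (two_row_tableaux (S - {Min S}) p q)"
    by (auto simp: inj_on_def)
  then show ?thesis
    using two_row_tableaux_Min_in_bottom[OF assms] card_image by simp
qed

lemma card_two_row_tableaux:
  assumes "finite S" "card S = p + q" "q \<le> p"
  shows "int (card (two_row_tableaux S p q)) = ballot_number p q"
  using assms
proof (induction "p + q" arbitrary: S p q)
  case 0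
  then have "two_row_tableaux S p q = {([], [])}"
    unfolding two_row_tableaux_def by auto
  then show ?case
    using 0 by simp
next
  case (Suc n)
  let ?T = two_row_tableaux and ?m = "Min S"
  let ?top = "{t \<in> ?T S p q. ?m \<in> set (fst t)}" and ?bottom = "{t \<in> ?T S p q. ?m \<in> set (snd t)}"
  have ne: "S \<noteq> {}"
    using Suc.hyps(2) Suc.prems by auto
  have IH: "int (card (?T (S - {?m}) p' q')) = ballot_number p' q'" if "p' + q' = n" "q' \<le> p'" for p' q'
    using Suc.hyps Suc.prems Min_in[OF Suc.prems(1) ne] that by simp
  have top: "int (card ?top) = (if q < p then ballot_number (p - 1) q else 0)"
  proof (cases "q < p")
    case True
    then obtain p' where "p = Suc p'" "q \<le> p'"
      by (cases p) auto
    then show ?thesis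
      using card_two_row_tableaux_Min_in_top[OF Suc.prems(1) ne] IH Suc.hyps(2) by simp
  next
    case False
    then have "?top = {}"
      using Suc.prems(3) two_row_tableaux_square_Min_not_in_top[OF Suc.prems(1)] by simp
    with False show ?thesis
      by (simp only: card.empty) simp
  qed
  have bottom: "int (card ?bottom) = (if q = 0 then 0 else ballot_number p (q - 1))"
  proof (cases q)
    case 0
    then have "?bottom = {}"
      unfolding two_row_tableaux_def by auto
    with 0 show ?thesis
      by (simp only: card.empty) simp
  next
    case (Suc q')
    then show ?thesis
      using card_two_row_tableaux_Min_in_bottom[OF Suc.prems(1) ne, of q' p] IH Suc.hyps(2) Suc.prems(3)
      by simp
  qed
  show ?case
  proof (cases "q < p")
    case True
    then obtain p' where "p = Suc p'"
      by (cases p) auto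
    then show ?thesis
      using card_two_row_tableaux_split[OF Suc.prems(1) ne] top bottom True
        ballot_number_Suc_Suc[of "q - 1" p'] by (cases q) simp_all
  next
    case False
    then obtain p' where "p = Suc p'" "q = p"
      using Suc.prems(3) Suc.hyps(2) by (cases p) auto
    then show ?thesis
      using card_two_row_tableaux_split[OF Suc.prems(1) ne] top bottom ballot_number_diagonal[of p']
      by simp
  qed
qed

section \<open>Ballot permutations avoiding 123\<close>

definition up_down_step :: "nat list \<Rightarrow> nat \<Rightarrow> bool" where
  "up_down_step xs j \<longleftrightarrow> (if even j then xs ! j < xs ! (j + 1) else xs ! (j + 1) < xs ! j)"

definition up_down :: "nat list \<Rightarrow> bool" where
  "up_down xs \<longleftrightarrow> (\<forall>j. j + 1 < length xs \<longrightarrow> up_down_step xs j)"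

text \<open>With 0-based indices the peaks sit at odd and the valleys at even positions; the final
  valley of an odd-length list is exempt.\<close>
definition peaks_valleys_decrease :: "nat list \<Rightarrow> bool" where
  "peaks_valleys_decrease xs \<longleftrightarrow>
     (\<forall>j. odd j \<longrightarrow> j + 2 < length xs \<longrightarrow> xs ! (j + 2) < xs ! j) \<and>
     (\<forall>j. even j \<longrightarrow> j + 3 < length xs \<longrightarrow> xs ! (j + 2) < xs ! j)"

definition zigzags :: "nat set \<Rightarrow> nat list set" where
  "zigzags S = {xs. distinct xs \<and> set xs = S \<and> up_down xs \<and> peaks_valleys_decrease xs}"

lemma card_Collect_less_Suc_Suc:
  "card {j. j + 1 < Suc (Suc k) \<and> P j} = card {j. j + 1 < Suc k \<and> P j} + (if P k then 1 else 0)"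
proof -
  have "{j. j + 1 < Suc (Suc k) \<and> P j} = {j. j + 1 < Suc k \<and> P j} \<union> {j. j = k \<and> P j}"
    by auto
  moreover have "finite {j. j + 1 < Suc k \<and> P j}"
    by (rule finite_subset[of _ "{..k}"]) auto
  moreover have "{j. j = k \<and> P j} = (if P k then {k} else {})"
    by auto
  ultimately show ?thesis
    by (simp add: card_Un_disjoint)
qed

lemma descents_prefix_Suc_Suc:
  "descents_prefix xs (Suc (Suc k)) =
     descents_prefix xs (Suc k) + (if k + 1 < length xs \<and> xs ! (k + 1) < xs ! k then 1 else 0)"
  unfolding descents_prefix_def by (rule card_Collect_less_Suc_Suc)

lemma ascents_prefix_Suc_Suc:
  "ascents_prefix xs (Suc (Suc k)) =
     ascents_prefix xs (Suc k) + (if k + 1 < length xs \<and> xs ! k < xs ! (k + 1) then 1 else 0)"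
  unfolding ascents_prefix_def by (rule card_Collect_less_Suc_Suc)

lemma prefix_counts_up_down:
  assumes "\<forall>j. j + 1 < i \<longrightarrow> up_down_step xs j" "i \<le> length xs"
  shows "ascents_prefix xs i = i div 2 \<and> descents_prefix xs i = (i - 1) div 2"
  using assms
proof (induction i)
  case 0
  then show ?case
    by (simp add: ascents_prefix_def descents_prefix_def)
next
  case (Suc i)
  show ?case
  proof (cases i)
    case 0
    then show ?thesis
      by (simp add: ascents_prefix_def descents_prefix_def)
  next
    case (Suc k)
    have "ascents_prefix xs i = i div 2 \<and> descents_prefix xs i = (i - 1) div 2"
      using Suc.IH Suc.prems by simp
    moreover have "up_down_step xs k" "k + 1 < length xs"
      using Suc.prems Suc by auto
    ultimately show ?thesis
      using Suc by (cases "even k")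
        (auto simp: ascents_prefix_Suc_Suc descents_prefix_Suc_Suc up_down_step_def elim!: evenE oddE)
  qed
qed

lemma up_down_imp_ballot:
  assumes "up_down xs"
  shows "ballot xs"
  unfolding ballot_def
proof (intro allI impI)
  fix i
  assume "i \<le> length xs"
  with assms have "ascents_prefix xs i = i div 2 \<and> descents_prefix xs i = (i - 1) div 2"
    unfolding up_down_def by (intro prefix_counts_up_down) auto
  then show "descents_prefix xs i \<le> ascents_prefix xs i"
    by simp
qed

lemma ballot_avoiding_123_imp_up_down:
  assumes "ballot xs" "\<not> contains_123 xs" "distinct xs"
  shows "up_down xs"
  unfolding up_down_def
proof (intro allI impI)
  fix j
  assume "j + 1 < length xs"
  then show "up_down_step xs j"
  proof (induction j rule: less_induct)
    case (less j)
    have neq: "xs ! j \<noteq> xs ! (j + 1)"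
      using assms(3) less.prems by (simp add: nth_eq_iff_index_eq)
    show ?case
    proof (cases "even j")
      case True
      \<comment> \<open>after an alternating prefix of even length, a descent would break the ballot condition\<close>
      have "ascents_prefix xs (Suc j) = Suc j div 2 \<and> descents_prefix xs (Suc j) = j div 2"
        using prefix_counts_up_down[of "Suc j" xs] less by simp
      moreover have "descents_prefix xs (Suc (Suc j)) \<le> ascents_prefix xs (Suc (Suc j))"
        using assms(1) less.prems unfolding ballot_def by simp
      ultimately show ?thesis
        using True neq less.prems
        by (auto simp: up_down_step_def ascents_prefix_Suc_Suc descents_prefix_Suc_Suc split: if_splits)
    next
      case False
      then obtain i where j: "j = Suc i" and "even i"
        by (cases j) auto
      then have "xs ! i < xs ! j"
        using less.IH[of i] less.prems by (simp add: up_down_step_def)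
      moreover have "\<not> xs ! j < xs ! (j + 1)"
      proof
        assume "xs ! j < xs ! (j + 1)"
        then have "contains_123 xs"
          unfolding contains_123_def using \<open>xs ! i < xs ! j\<close> j less.prems
          by (intro exI[of _ i] exI[of _ j] exI[of _ "j + 1"]) simp
        then show False
          using assms(2) by simp
      qed
      ultimately show ?thesis
        using False neq by (simp add: up_down_step_def)
    qed
  qed
qed

lemma up_down_avoiding_123_imp_peaks_valleys_decrease:
  assumes "up_down xs" "\<not> contains_123 xs" "distinct xs"
  shows "peaks_valleys_decrease xs"
proof -
  have no_123: "\<not> (xs ! a < xs ! b \<and> xs ! b < xs ! c)"
    if "a < b" "b < c" "c < length xs" for a b c
    using assms(2) that unfolding contains_123_def by blast
  have neq: "xs ! a \<noteq> xs ! b" if "a < b" "b < length xs" for a b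
    using assms(3) that by (simp add: nth_eq_iff_index_eq)
  show ?thesis
    unfolding peaks_valleys_decrease_def
  proof (intro conjI allI impI)
    fix j
    assume j: "odd j" "j + 2 < length xs"
    then obtain i where "j = Suc i" "even i"
      by (cases j) auto
    then have "xs ! i < xs ! j"
      using assms(1) j unfolding up_down_def up_down_step_def by (auto dest: spec[of _ i])
    then show "xs ! (j + 2) < xs ! j"
      using no_123[of i j "j + 2"] neq[of j "j + 2"] \<open>j = Suc i\<close> j(2) by fastforce
  next
    fix j
    assume j: "even j" "j + 3 < length xs"
    then have "xs ! (j + 2) < xs ! (j + 3)"
      using assms(1) unfolding up_down_def up_down_step_def
      by (auto dest: spec[of _ "j + 2"] simp: numeral_3_eq_3)
    then show "xs ! (j + 2) < xs ! j"
      using no_123[of j "j + 2" "j + 3"] neq[of j "j + 2"] j(2) by fastforce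
  qed
qed

lemma peaks_valleys_decrease_nth:
  assumes "peaks_valleys_decrease xs" "i < j" "even (j - i)" "j < length xs"
    "even j \<longrightarrow> j + 1 < length xs"
  shows "xs ! j < xs ! i"
  using assms(2-5)
proof (induction j rule: less_induct)
  case (less j)
  define j' where "j' = j - 2"
  have j: "j = j' + 2" "i \<le> j'"
    using less.prems unfolding j'_def by presburger+
  have step: "xs ! j < xs ! j'"
    using assms(1) less.prems j unfolding peaks_valleys_decrease_def by (cases "even j'") auto
  show ?case
  proof (cases "i = j'")
    case False
    then have "xs ! j' < xs ! i"
      using less.IH[of j'] less.prems j by auto
    then show ?thesis
      using step by simp
  qed (use step in simp)
qed

lemma peak_dominates_suffix:
  assumes "up_down xs" "peaks_valleys_decrease xs" "odd i" "i < j" "j < length xs"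
  shows "xs ! j < xs ! i"
proof (cases "even j")
  case True
  \<comment> \<open>a later valley lies below the peak just before it\<close>
  then obtain j' where j: "j = Suc j'" "odd j'" "i \<le> j'"
    using assms(3,4) by (cases j) auto
  then have "xs ! j < xs ! j'"
    using assms(1,5) unfolding up_down_def up_down_step_def by (auto dest: spec[of _ j'])
  moreover have "xs ! j' \<le> xs ! i"
    using peaks_valleys_decrease_nth[OF assms(2), of i j'] assms(3,5) j
    by (cases "i = j'") auto
  ultimately show ?thesis
    by simp
next
  case False
  then show ?thesis
    using peaks_valleys_decrease_nth[OF assms(2,4)] assms(3,5) by simp
qed

lemma up_down_peaks_valleys_decrease_avoids_123:
  assumes "up_down xs" "peaks_valleys_decrease xs"
  shows "\<not> contains_123 xs"
proof
  assume "contains_123 xs"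
  then obtain a b c where abc: "a < b" "b < c" "c < length xs" "xs ! a < xs ! b" "xs ! b < xs ! c"
    unfolding contains_123_def by blast
  consider "odd b" | "even b" "odd a" | "even b" "even a"
    by blast
  then show False
  proof cases
    case 1
    then show False
      using peak_dominates_suffix[OF assms, of b c] abc by simp
  next
    case 2
    then show False
      using peak_dominates_suffix[OF assms, of a b] abc by simp
  next
    case 3
    then show False
      using peaks_valleys_decrease_nth[OF assms(2), of a b] abc by simp
  qed
qed

lemma ballot_avoid_123_eq_zigzags: "ballot_avoid_123 n = zigzags {1..n}"
  unfolding ballot_avoid_123_def perms_def zigzags_def
  using up_down_imp_ballot ballot_avoiding_123_imp_up_down
    up_down_avoiding_123_imp_peaks_valleys_decrease up_down_peaks_valleys_decrease_avoids_123
  by blast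

section \<open>Peaks and valleys as a tableau\<close>

definition even_entries :: "'a list \<Rightarrow> 'a list" where
  "even_entries xs = map (\<lambda>i. xs ! (2 * i)) [0..<(length xs + 1) div 2]"

definition odd_entries :: "'a list \<Rightarrow> 'a list" where
  "odd_entries xs = map (\<lambda>i. xs ! (2 * i + 1)) [0..<length xs div 2]"

definition interleave :: "'a list \<Rightarrow> 'a list \<Rightarrow> 'a list" where
  "interleave xs ys = map (\<lambda>i. if even i then xs ! (i div 2) else ys ! (i div 2)) [0..<length xs + length ys]"

lemma length_even_entries [simp]: "length (even_entries xs) = (length xs + 1) div 2"
  by (simp add: even_entries_def)

lemma length_odd_entries [simp]: "length (odd_entries xs) = length xs div 2"
  by (simp add: odd_entries_def)

lemma length_interleave [simp]: "length (interleave xs ys) = length xs + length ys"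
  by (simp add: interleave_def)

lemma nth_even_entries [simp]: "i < (length xs + 1) div 2 \<Longrightarrow> even_entries xs ! i = xs ! (2 * i)"
  by (simp add: even_entries_def)

lemma nth_odd_entries [simp]: "i < length xs div 2 \<Longrightarrow> odd_entries xs ! i = xs ! (2 * i + 1)"
  by (simp add: odd_entries_def)

lemma nth_interleave:
  "i < length xs + length ys \<Longrightarrow>
    interleave xs ys ! i = (if even i then xs ! (i div 2) else ys ! (i div 2))"
  by (simp add: interleave_def)

lemma interleave_even_odd_entries: "interleave (even_entries xs) (odd_entries xs) = xs"
proof (rule nth_equalityI)
  fix i
  assume "i < length (interleave (even_entries xs) (odd_entries xs))"
  then have "i < length xs"
    by simp
  then show "interleave (even_entries xs) (odd_entries xs) ! i = xs ! i"
  proof (cases "even i")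
    case True
    then have "i div 2 < (length xs + 1) div 2" "2 * (i div 2) = i"
      using \<open>i < length xs\<close> by presburger+
    then show ?thesis
      using True \<open>i < length xs\<close> by (simp add: nth_interleave)
  next
    case False
    then have "i div 2 < length xs div 2" "2 * (i div 2) + 1 = i"
      using \<open>i < length xs\<close> by presburger+
    then show ?thesis
      using False \<open>i < length xs\<close> by (simp add: nth_interleave)
  qed
qed simp

lemma even_entries_interleave: "length xs = length ys \<Longrightarrow> even_entries (interleave xs ys) = xs"
  by (rule nth_equalityI) (simp_all add: nth_interleave)

lemma odd_entries_interleave: "length xs = length ys \<Longrightarrow> odd_entries (interleave xs ys) = ys"
  by (rule nth_equalityI) (simp_all add: nth_interleave)

lemma sorted_wrt_distinct_greater: "sorted_wrt (>) (xs :: 'a :: linorder list) \<Longrightarrow> distinct xs"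
  by (induction xs) auto

lemma set_even_entries_Un_odd_entries: "set (even_entries xs) \<union> set (odd_entries xs) = set xs"
proof
  show "set (even_entries xs) \<union> set (odd_entries xs) \<subseteq> set xs"
    unfolding even_entries_def odd_entries_def by auto
  show "set xs \<subseteq> set (even_entries xs) \<union> set (odd_entries xs)"
  proof
    fix x
    assume "x \<in> set xs"
    then obtain i where i: "i < length xs" "x = xs ! i"
      by (auto simp: in_set_conv_nth)
    show "x \<in> set (even_entries xs) \<union> set (odd_entries xs)"
    proof (cases "even i")
      case True
      then have "x = even_entries xs ! (i div 2)" "i div 2 < length (even_entries xs)"
        using i by auto
      then show ?thesis
        by (metis UnI1 nth_mem)
    next
      case False
      then have "x = odd_entries xs ! (i div 2)" "i div 2 < length (odd_entries xs)"
        using i by (auto elim!: oddE)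
      then show ?thesis
        by (metis UnI2 nth_mem)
    qed
  qed
qed

lemma zigzag_imp_two_row_tableau:
  assumes len: "length xs = 2 * k" and "xs \<in> zigzags S"
  shows "(odd_entries xs, even_entries xs) \<in> two_row_tableaux S k k"
proof -
  let ?as = "odd_entries xs" and ?bs = "even_entries xs"
  have zz: "distinct xs" "set xs = S" "up_down xs" "peaks_valleys_decrease xs"
    using assms(2) unfolding zigzags_def by auto
  have as_nth: "?as ! i = xs ! (2 * i + 1)" and bs_nth: "?bs ! i = xs ! (2 * i)" if "i < k" for i
    using that len by simp_all
  have "sorted_wrt (>) ?as"
    unfolding sorted_wrt_iff_nth_less
    using peaks_valleys_decrease_nth[OF zz(4)] len by (auto simp: as_nth)
  moreover have "sorted_wrt (>) ?bs"
    unfolding sorted_wrt_iff_nth_less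
    using peaks_valleys_decrease_nth[OF zz(4)] len by (auto simp: bs_nth)
  moreover have "set ?as \<inter> set ?bs = {}"
  proof -
    have "xs ! (2 * i + 1) \<noteq> xs ! (2 * j)" if "i < k" "j < k" for i j
      using zz(1) that len nth_eq_iff_index_eq[of xs "2 * i + 1" "2 * j"] by presburger
    moreover have "set ?as = (\<lambda>i. xs ! (2 * i + 1)) ` {..<k}" "set ?bs = (\<lambda>i. xs ! (2 * i)) ` {..<k}"
      using len by (auto simp: odd_entries_def even_entries_def lessThan_atLeast0)
    ultimately show ?thesis
      by auto
  qed
  moreover have "\<forall>i<k. ?bs ! i < ?as ! i"
  proof (intro allI impI)
    fix i
    assume "i < k"
    then have "up_down_step xs (2 * i)"
      using zz(3) len unfolding up_down_def by simp
    then show "?bs ! i < ?as ! i"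
      using \<open>i < k\<close> by (simp add: as_nth bs_nth up_down_step_def)
  qed
  ultimately show ?thesis
    unfolding two_row_tableaux_def
    using len zz(2) set_even_entries_Un_odd_entries[of xs] by auto
qed

lemma interleaved_rows_up_down:
  assumes len: "length xs = 2 * k"
    and rows: "sorted_wrt (>) (odd_entries xs)" "sorted_wrt (>) (even_entries xs)"
    and columns: "\<forall>i<k. even_entries xs ! i < odd_entries xs ! i"
  shows "up_down xs" "peaks_valleys_decrease xs"
proof -
  have peaks: "xs ! (2 * j + 1) < xs ! (2 * i + 1)" if "i < j" "j < k" for i j
    using rows(1) that len by (simp add: sorted_wrt_iff_nth_less)
  have valleys: "xs ! (2 * j) < xs ! (2 * i)" if "i < j" "j < k" for i j
    using rows(2) that len by (simp add: sorted_wrt_iff_nth_less)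
  have column: "xs ! (2 * i) < xs ! (2 * i + 1)" if "i < k" for i
    using columns that len by simp
  show "up_down xs"
    unfolding up_down_def up_down_step_def
  proof (intro allI impI)
    fix j
    assume "j + 1 < length xs"
    then show "if even j then xs ! j < xs ! (j + 1) else xs ! (j + 1) < xs ! j"
      using len column[of "j div 2"] column[of "j div 2 + 1"] peaks[of "j div 2" "j div 2 + 1"]
      by (cases "even j") (auto elim!: evenE oddE)
  qed
  show "peaks_valleys_decrease xs"
    unfolding peaks_valleys_decrease_def
  proof (intro conjI allI impI)
    fix j
    assume "odd j" "j + 2 < length xs"
    moreover define i where "i = j div 2"
    ultimately have "j = 2 * i + 1" "i + 1 < k"
      using len by presburger+
    then show "xs ! (j + 2) < xs ! j"
      using peaks[of i "i + 1"] by (simp add: algebra_simps)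
  next
    fix j
    assume "even j" "j + 3 < length xs"
    moreover define i where "i = j div 2"
    ultimately have "j = 2 * i" "i + 1 < k"
      using len by presburger+
    then show "xs ! (j + 2) < xs ! j"
      using valleys[of i "i + 1"] by (simp add: algebra_simps)
  qed
qed

lemma two_row_tableau_imp_zigzag:
  assumes len: "length xs = 2 * k"
    and tab: "(odd_entries xs, even_entries xs) \<in> two_row_tableaux S k k"
  shows "xs \<in> zigzags S"
proof -
  let ?as = "odd_entries xs" and ?bs = "even_entries xs"
  have rows: "sorted_wrt (>) ?as" "sorted_wrt (>) ?bs" and "set ?as \<inter> set ?bs = {}"
    using tab unfolding two_row_tableaux_def by auto
  then have "card (set ?as \<union> set ?bs) = length ?as + length ?bs"
    by (simp add: card_Un_disjoint distinct_card sorted_wrt_distinct_greater)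
  then have "card (set xs) = length xs"
    using len set_even_entries_Un_odd_entries[of xs] by (simp add: Un_commute)
  moreover have "set xs = S"
    using tab set_even_entries_Un_odd_entries[of xs] unfolding two_row_tableaux_def by auto
  moreover have "up_down xs" "peaks_valleys_decrease xs"
    using interleaved_rows_up_down[OF len rows] tab unfolding two_row_tableaux_def by auto
  ultimately show ?thesis
    unfolding zigzags_def by (simp add: card_distinct)
qed

lemma zigzags_iff_two_row_tableaux:
  "length xs = 2 * k \<Longrightarrow> xs \<in> zigzags S \<longleftrightarrow> (odd_entries xs, even_entries xs) \<in> two_row_tableaux S k k"
  using zigzag_imp_two_row_tableau two_row_tableau_imp_zigzag by blast

lemma up_down_snoc:
  assumes "even (length ys)"
  shows "up_down (ys @ [c]) \<longleftrightarrow> up_down ys \<and> (ys \<noteq> [] \<longrightarrow> c < last ys)"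
proof -
  have old: "up_down_step (ys @ [c]) j \<longleftrightarrow> up_down_step ys j" if "j + 1 < length ys" for j
    using that by (simp add: up_down_step_def nth_append)
  have new: "up_down_step (ys @ [c]) (length ys - 1) \<longleftrightarrow> c < last ys" if "ys \<noteq> []"
  proof -
    have "odd (length ys - 1)" "length ys - 1 + 1 = length ys"
      using assms that by (simp_all add: Suc_leI)
    then show ?thesis
      using that by (simp add: up_down_step_def nth_append last_conv_nth)
  qed
  have "(\<forall>j. j + 1 < Suc (length ys) \<longrightarrow> up_down_step (ys @ [c]) j) \<longleftrightarrow>
      (\<forall>j. j + 1 < length ys \<longrightarrow> up_down_step (ys @ [c]) j) \<and>
      (ys \<noteq> [] \<longrightarrow> up_down_step (ys @ [c]) (length ys - 1))"
    by (cases ys) (auto simp: less_Suc_eq)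
  then show ?thesis
    unfolding up_down_def using old new by auto
qed

lemma peaks_valleys_decrease_snoc:
  assumes "even (length ys)"
  shows "peaks_valleys_decrease (ys @ [c]) \<longleftrightarrow> peaks_valleys_decrease ys"
proof -
  have "j + 2 < Suc (length ys) \<longleftrightarrow> j + 2 < length ys" if "odd j" for j
    using assms that by presburger
  moreover have "j + 3 < Suc (length ys) \<longleftrightarrow> j + 3 < length ys" if "even j" for j
    using assms that by presburger
  ultimately show ?thesis
    unfolding peaks_valleys_decrease_def by (auto simp: nth_append)
qed

lemma zigzags_snoc_iff:
  assumes "even (length ys)"
  shows "ys @ [c] \<in> zigzags S \<longleftrightarrow> c \<in> S \<and> ys \<in> zigzags (S - {c}) \<and> (ys \<noteq> [] \<longrightarrow> c < last ys)"
  unfolding zigzags_def using up_down_snoc[OF assms] peaks_valleys_decrease_snoc[OF assms]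
  by auto

lemma sorted_wrt_greater_last_le:
  "sorted_wrt (>) xs \<Longrightarrow> a \<in> set xs \<Longrightarrow> last xs \<le> (a :: 'a :: linorder)"
  by (induction xs) (auto simp: less_imp_le)

lemma last_odd_entries:
  assumes "even (length xs)" "xs \<noteq> []"
  shows "last (odd_entries xs) = last xs"
proof -
  have "0 < length xs"
    using assms(2) by simp
  then have "length xs div 2 - 1 < length xs div 2" "2 * (length xs div 2 - 1) + 1 = length xs - 1"
    using assms(1) by presburger+
  moreover have "odd_entries xs \<noteq> []"
    using calculation(1) by (metis length_0_conv length_odd_entries less_zeroE)
  ultimately show ?thesis
    using assms by (simp add: last_conv_nth)
qed

lemma snoc_zigzags_iff_two_row_tableaux:
  assumes len: "length ys = 2 * k"
  shows "ys @ [c] \<in> zigzags S \<longleftrightarrow>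
    (odd_entries ys @ [c], even_entries ys) \<in> two_row_tableaux S (Suc k) k"
proof -
  let ?as = "odd_entries ys"
  have "(ys \<noteq> [] \<longrightarrow> c < last ys) \<longleftrightarrow> (\<forall>a\<in>set ?as. c < a)" if "sorted_wrt (>) ?as"
  proof (cases "ys = []")
    case False
    then have "?as \<noteq> []" "last ?as = last ys"
      using len last_odd_entries[of ys] by (auto simp flip: length_greater_0_conv)
    then show ?thesis
      using sorted_wrt_greater_last_le[OF that] last_in_set[of ?as] False
      by (auto intro: order.strict_trans2)
  qed (simp add: odd_entries_def)
  moreover have "ys @ [c] \<in> zigzags S \<longleftrightarrow>
      c \<in> S \<and> (?as, even_entries ys) \<in> two_row_tableaux (S - {c}) k k \<and> (ys \<noteq> [] \<longrightarrow> c < last ys)"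
    using zigzags_snoc_iff[of ys c S] zigzags_iff_two_row_tableaux[OF len] len by simp
  moreover have "(?as @ [c], even_entries ys) \<in> two_row_tableaux S (Suc k) k \<longleftrightarrow>
      c \<in> S \<and> (?as, even_entries ys) \<in> two_row_tableaux (S - {c}) k k \<and> (\<forall>a\<in>set ?as. c < a)"
    by (rule two_row_tableaux_snoc_top) simp
  moreover have "(?as, even_entries ys) \<in> two_row_tableaux (S - {c}) k k \<Longrightarrow> sorted_wrt (>) ?as"
    unfolding two_row_tableaux_def by simp
  ultimately show ?thesis
    by fast
qed

lemma length_zigzag: "finite S \<Longrightarrow> xs \<in> zigzags S \<Longrightarrow> length xs = card S"
  unfolding zigzags_def by (auto simp: distinct_card)

lemma bij_betw_zigzags_even:
  assumes "finite S" "card S = 2 * k"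
  shows "bij_betw (\<lambda>xs. (odd_entries xs, even_entries xs)) (zigzags S) (two_row_tableaux S k k)"
proof (rule bij_betw_byWitness[where f' = "\<lambda>(as, bs). interleave bs as"])
  show "\<forall>xs\<in>zigzags S. (\<lambda>(as, bs). interleave bs as) (odd_entries xs, even_entries xs) = xs"
    by (simp add: interleave_even_odd_entries)
  show "\<forall>t\<in>two_row_tableaux S k k.
      (\<lambda>xs. (odd_entries xs, even_entries xs)) ((\<lambda>(as, bs). interleave bs as) t) = t"
    by (auto simp: two_row_tableaux_def even_entries_interleave odd_entries_interleave)
  show "(\<lambda>xs. (odd_entries xs, even_entries xs)) ` zigzags S \<subseteq> two_row_tableaux S k k"
  proof (rule image_subsetI)
    fix xs
    assume "xs \<in> zigzags S"
    then show "(odd_entries xs, even_entries xs) \<in> two_row_tableaux S k k"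
      using zigzags_iff_two_row_tableaux[of xs k S] length_zigzag[OF assms(1)] assms(2) by simp
  qed
  show "(\<lambda>(as, bs). interleave bs as) ` two_row_tableaux S k k \<subseteq> zigzags S"
  proof clarify
    fix as bs
    assume t: "(as, bs) \<in> two_row_tableaux S k k"
    then have "length as = k" "length bs = k"
      unfolding two_row_tableaux_def by auto
    then show "interleave bs as \<in> zigzags S"
      using t zigzags_iff_two_row_tableaux[of "interleave bs as" k S]
      by (simp add: even_entries_interleave odd_entries_interleave)
  qed
qed

lemma bij_betw_zigzags_odd:
  assumes "finite S" "card S = Suc (2 * k)"
  shows "bij_betw (\<lambda>xs. (odd_entries (butlast xs) @ [last xs], even_entries (butlast xs)))
    (zigzags S) (two_row_tableaux S (Suc k) k)"
proof (rule bij_betw_byWitness[where f' = "\<lambda>(as, bs). interleave bs (butlast as) @ [last as]"])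
  have snoc: "xs = butlast xs @ [last xs]" "length (butlast xs) = 2 * k" if "xs \<in> zigzags S" for xs
    using length_zigzag[OF assms(1) that] assms(2) by (auto simp flip: length_greater_0_conv)
  have tab: "as = butlast as @ [last as]" "length (butlast as) = k" "length bs = k"
    if "(as, bs) \<in> two_row_tableaux S (Suc k) k" for as bs
    using that unfolding two_row_tableaux_def by (auto simp flip: length_greater_0_conv)
  show "\<forall>xs\<in>zigzags S. (\<lambda>(as, bs). interleave bs (butlast as) @ [last as])
      (odd_entries (butlast xs) @ [last xs], even_entries (butlast xs)) = xs"
    using snoc by (simp add: interleave_even_odd_entries)
  show "\<forall>t\<in>two_row_tableaux S (Suc k) k.
      (\<lambda>xs. (odd_entries (butlast xs) @ [last xs], even_entries (butlast xs)))
        ((\<lambda>(as, bs). interleave bs (butlast as) @ [last as]) t) = t"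
    using tab by (auto simp: even_entries_interleave odd_entries_interleave)
  show "(\<lambda>xs. (odd_entries (butlast xs) @ [last xs], even_entries (butlast xs))) ` zigzags S
      \<subseteq> two_row_tableaux S (Suc k) k"
  proof (rule image_subsetI)
    fix xs
    assume xs: "xs \<in> zigzags S"
    then have "butlast xs @ [last xs] \<in> zigzags S"
      using snoc(1) by simp
    then show "(odd_entries (butlast xs) @ [last xs], even_entries (butlast xs))
        \<in> two_row_tableaux S (Suc k) k"
      using snoc_zigzags_iff_two_row_tableaux[OF snoc(2)[OF xs]] by blast
  qed
  show "(\<lambda>(as, bs). interleave bs (butlast as) @ [last as]) ` two_row_tableaux S (Suc k) k
      \<subseteq> zigzags S"
  proof clarify
    fix as bs
    assume t: "(as, bs) \<in> two_row_tableaux S (Suc k) k"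
    then show "interleave bs (butlast as) @ [last as] \<in> zigzags S"
      using tab[OF t] snoc_zigzags_iff_two_row_tableaux[of "interleave bs (butlast as)" k "last as" S]
      by (simp add: even_entries_interleave odd_entries_interleave)
  qed
qed

theorem mainTheorem8:
  fixes n :: nat
  assumes "n \<ge> 1"
  shows "card (ballot_avoid_123 n) = catalan ((n + 1) div 2)"
proof (cases "even n")
  case True
  then obtain k where n: "n = 2 * k"
    by blast
  have "int (card (ballot_avoid_123 n)) = int (card (two_row_tableaux {1..n} k k))"
    using bij_betw_same_card[OF bij_betw_zigzags_even] n by (simp add: ballot_avoid_123_eq_zigzags)
  also have "\<dots> = ballot_number k k"
    by (rule card_two_row_tableaux) (simp_all add: n)
  finally show ?thesis
    using n by (simp add: ballot_number_catalan)
next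
  case False
  then obtain k where n: "n = Suc (2 * k)"
    using oddE by fastforce
  have "int (card (ballot_avoid_123 n)) = int (card (two_row_tableaux {1..n} (Suc k) k))"
    using bij_betw_same_card[OF bij_betw_zigzags_odd] n by (simp add: ballot_avoid_123_eq_zigzags)
  also have "\<dots> = ballot_number (Suc k) k"
    by (rule card_two_row_tableaux) (simp_all add: n)
  also have "\<dots> = ballot_number (Suc k) (Suc k)"
    by (rule ballot_number_diagonal[symmetric])
  finally show ?thesis
    using n by (simp add: ballot_number_catalan)
qed

end
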